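(* Let $\rho\in[-1,1]$, let $A\in\mathbb{R}^{n\times n}$ be a normalized elliptic matrix with parameter $\rho$, $\boldsymbol u^0\in\mathbb{R}^n$, $B\in\mathbb{R}^{n\times p}$, and let $h_0,h_1,\dots:\mathbb{R}^{p+1}\to\mathbb{R}$ be functions with a fixed partial derivative $\partial_1h_k$ in the first argument. Consider the iterates $\boldsymbol u^{k+1}=A\boldsymbol q^k-\rho d_k\boldsymbol q^{k-1}$, $k\ge0$, with the notation of the context. Then $\boldsymbol u^1=A\boldsymbol q^0=\mathcal I_0(A)$ and for every $k\ge1$, $$\boldsymbol u^{k+1}=\sum_{\ell=1}^k\alpha^k_\ell\boldsymbol u^\ell+\rho\,Q_k(Q_k^\top Q_k)^\dagger\Big(\boldsymbol v^{k,k}-\sum_{\ell=1}^k\alpha^k_\ell\boldsymbol v^{k,\ell-1}\Big)+\mathcal I_k(A).$$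
   Context: $\mathrm{Elliptic}(n,\rho)$: $M_{ii}\sim\mathcal N(0,1+\rho)$, for $i<j$ $(M_{ij},M_{ji})$ centered Gaussian with variances 1 and covariance $\rho$, all independent across $\{M_{ii}\}\cup\{(M_{ij},M_{ji})\}_{i<j}$; $A$ normalized elliptic means $\sqrt nA\sim\mathrm{Elliptic}(n,\rho)$. For $h:\mathbb{R}^{p+1}\to\mathbb{R}$, $h(\boldsymbol u,B)=(h(u_i,B_{i1},\dots,B_{ip}))_i$. Notation: $\boldsymbol q^k=h_k(\boldsymbol u^k,B)$ for $k\ge0$, $\boldsymbol q^{-1}=0$; $d_k=\frac1n\sum_i\partial_1h_k(u^k_i,B_{i,*})$ for $k\ge1$, $d_0=0$; $Q_k=[\boldsymbol q^0,\dots,\boldsymbol q^{k-1}]$, $U_k=[\boldsymbol u^1,\dots,\boldsymbol u^k]\in\mathbb{R}^{n\times k}$; $\dagger$ denotes the Moore–Penrose pseudo-inverse; $P_k=Q_k(Q_k^\top Q_k)^\dagger Q_k^\top$ (orthogonal projection on the column span of $Q_k$), $P_k^\perp=I_n-P_k$, $P_0=0$, $P_0^\perp=I_n$; $\boldsymbol\alpha^k=(\alpha^k_1,\dots,\alpha^k_k)^\top=(Q_k^\top Q_k)^\dagger Q_k^\top\boldsymbol q^k$; for $k\ge1,\ell\ge0$, $\boldsymbol v^{k,\ell}=U_k^\top\boldsymbol q^\ell-d_\ell Q_k^\top\boldsymbol q^{\ell-1}$; $\mathcal I_k(A)=(A-\rho P_kA^\top)P_k^\perp\boldsymbol q^k$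 for $k\ge0$. *)

theory Defs
  imports "Jordan_Normal_Form.Matrix"
begin

definition pinv :: "real mat \<Rightarrow> real mat" where
  "pinv M = (THE X. X \<in> carrier_mat (dim_col M) (dim_row M) \<and> M * X * M = M \<and> X * M * X = X
              \<and> transpose_mat (M * X) = M * X \<and> transpose_mat (X * M) = X * M)"

text \<open>Row-wise application h(u,B) = (h(u_i, B_i1, ..., B_ip))_i; rows of B are vectors of length p.\<close>
definition happ :: "(real \<Rightarrow> real vec \<Rightarrow> real) \<Rightarrow> real vec \<Rightarrow> real mat \<Rightarrow> real vec" where
  "happ f u B = vec (dim_row B) (\<lambda>i. f (u $ i) (row B i))"

definition qv :: "(nat \<Rightarrow> real \<Rightarrow> real vec \<Rightarrow> real) \<Rightarrow> (nat \<Rightarrow> real vec) \<Rightarrow> real mat \<Rightarrow> nat \<Rightarrow> real vec" where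
  "qv h u B k = happ (h k) (u k) B"

text \<open>qprev h u B l = q^(l-1), with q^(-1) = 0.\<close>
definition qprev :: "(nat \<Rightarrow> real \<Rightarrow> real vec \<Rightarrow> real) \<Rightarrow> (nat \<Rightarrow> real vec) \<Rightarrow> real mat \<Rightarrow> nat \<Rightarrow> real vec" where
  "qprev h u B l = (if l = 0 then 0\<^sub>v (dim_row B) else qv h u B (l - 1))"

text \<open>d_k = (1/n) sum_i dh_k(u^k_i, B_i), dh_k the (fixed) partial derivative of h_k in its first argument; d_0 = 0.\<close>
definition dk :: "(nat \<Rightarrow> real \<Rightarrow> real vec \<Rightarrow> real) \<Rightarrow> (nat \<Rightarrow> real vec) \<Rightarrow> real mat \<Rightarrow> nat \<Rightarrow> real" where
  "dk dh u B k = (if k = 0 then 0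
     else (1 / real (dim_row B)) * (\<Sum>i<dim_row B. dh k (u k $ i) (row B i)))"

definition Qm :: "(nat \<Rightarrow> real \<Rightarrow> real vec \<Rightarrow> real) \<Rightarrow> (nat \<Rightarrow> real vec) \<Rightarrow> real mat \<Rightarrow> nat \<Rightarrow> real mat" where
  "Qm h u B k = mat (dim_row B) k (\<lambda>(i, j). qv h u B j $ i)"

definition Um :: "(nat \<Rightarrow> real vec) \<Rightarrow> nat \<Rightarrow> nat \<Rightarrow> real mat" where
  "Um u n k = mat n k (\<lambda>(i, j). u (j + 1) $ i)"

definition Pm :: "(nat \<Rightarrow> real \<Rightarrow> real vec \<Rightarrow> real) \<Rightarrow> (nat \<Rightarrow> real vec) \<Rightarrow> real mat \<Rightarrow> nat \<Rightarrow> real mat" where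
  "Pm h u B k = (let Q = Qm h u B k in Q * pinv (transpose_mat Q * Q) * transpose_mat Q)"

text \<open>alpha^k = (Q_k^T Q_k)^dagger Q_k^T q^k, a vector of length k; alpha^k_l = alpha $ (l - 1).\<close>
definition alph :: "(nat \<Rightarrow> real \<Rightarrow> real vec \<Rightarrow> real) \<Rightarrow> (nat \<Rightarrow> real vec) \<Rightarrow> real mat \<Rightarrow> nat \<Rightarrow> real vec" where
  "alph h u B k = (let Q = Qm h u B k in pinv (transpose_mat Q * Q) *\<^sub>v (transpose_mat Q *\<^sub>v qv h u B k))"

definition vv :: "(nat \<Rightarrow> real \<Rightarrow> real vec \<Rightarrow> real) \<Rightarrow> (nat \<Rightarrow> real \<Rightarrow> real vec \<Rightarrow> real) \<Rightarrow> (nat \<Rightarrow> real vec) \<Rightarrow> real mat \<Rightarrow> nat \<Rightarrow> nat \<Rightarrow> real vec" where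
  "vv h dh u B k l = transpose_mat (Um u (dim_row B) k) *\<^sub>v qv h u B l
      - dk dh u B l \<cdot>\<^sub>v (transpose_mat (Qm h u B k) *\<^sub>v qprev h u B l)"

definition Ik :: "real \<Rightarrow> (nat \<Rightarrow> real \<Rightarrow> real vec \<Rightarrow> real) \<Rightarrow> (nat \<Rightarrow> real vec) \<Rightarrow> real mat \<Rightarrow> real mat \<Rightarrow> nat \<Rightarrow> real vec" where
  "Ik \<rho> h u B A k = (let n = dim_row B; P = Pm h u B k in
      (A - \<rho> \<cdot>\<^sub>m (P * transpose_mat A)) *\<^sub>v ((1\<^sub>m n - P) *\<^sub>v qv h u B k))"

end

(*
  Split q^k = Q_k alpha^k + P_k^perp q^k, where Q_k alpha^k = P_k q^k is the orthogonal projection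
  of q^k onto the span of q^0, ..., q^(k-1). The recursion for the earlier iterates says
  A Q_k = U_k + rho Q_k S_k, where S_k is the shift matrix carrying the Onsager coefficients d_j.
  Hence A Q_k alpha^k = U_k alpha^k + rho Q_k S_k alpha^k and, because Q_k^T P_k^perp = 0,
  P_k A^T P_k^perp q^k = Q_k (Q_k^T Q_k)^+ U_k^T P_k^perp q^k. Substituting both into
  A q^k = A Q_k alpha^k + I_k(A) + rho P_k A^T P_k^perp q^k and using that P_k fixes q^(k-1) and
  Q_k S_k alpha^k, the remainder is exactly rho Q_k (Q_k^T Q_k)^+ (v^(k,k) - sum_l alpha_l v^(k,l-1)).

  They follow
  from G G^+ G = G, so the existence of the Moore-Penrose inverse is needed; it is obtained from a
  full-rank factorisation M = F C as C^T (C C^T)^-1 (F^T F)^-1 F^T.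
*)
theory Submission
  imports Defs "Jordan_Normal_Form.Determinant" "Jordan_Normal_Form.Matrix_Kernel"
begin

lemma assoc_mult_mat_dims:
  "dim_col A = dim_row B \<Longrightarrow> dim_col B = dim_row C \<Longrightarrow> A * B * C = A * (B * C)"
  by (rule assoc_mult_mat[of A "dim_row A" "dim_col A" B "dim_col B" C "dim_col C"]) auto

lemma assoc_mult_mat_vec_dims:
  assumes "dim_col A = dim_row B" "dim_vec v = dim_col B"
  shows "(A * B) *\<^sub>v v = A *\<^sub>v (B *\<^sub>v v)"
  by (rule assoc_mult_mat_vec[OF carrier_matI[OF refl refl] carrier_matI[OF assms(1)[symmetric] refl]
        carrier_vecI[OF assms(2)]])

lemma transpose_mult_dims:
  "dim_col A = dim_row (B :: 'a :: comm_semiring_0 mat) \<Longrightarrow> (A * B)\<^sup>T = B\<^sup>T * A\<^sup>T"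
  by (rule transpose_mult[of A "dim_row A" "dim_col A" B "dim_col B"]) auto

lemma transpose_smult_mat: "(c \<cdot>\<^sub>m A)\<^sup>T = c \<cdot>\<^sub>m A\<^sup>T"
  by (intro eq_matI) auto

lemma smult_mat_mult_mat_vec:
  fixes A :: "'a :: comm_ring mat"
  assumes "A \<in> carrier_mat nr nc" "v \<in> carrier_vec nc"
  shows "(c \<cdot>\<^sub>m A) *\<^sub>v v = c \<cdot>\<^sub>v (A *\<^sub>v v)"
  using assms by (intro eq_vecI) (auto simp: scalar_prod_def sum_distrib_left mult.assoc)

lemma mult_mat_vec_zero:
  fixes A :: "'a :: comm_ring mat"
  shows "A \<in> carrier_mat nr nc \<Longrightarrow> A *\<^sub>v 0\<^sub>v nc = 0\<^sub>v nr"
  by (intro eq_vecI) (auto simp: scalar_prod_def)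

lemma col_minus_mat:
  "A \<in> carrier_mat nr nc \<Longrightarrow> B \<in> carrier_mat nr nc \<Longrightarrow> j < nc \<Longrightarrow> col (A - B) j = col A j - col B j"
  by (rule eq_vecI) auto

lemma mult_mat_unit_vec:
  fixes M :: "'a :: semiring_1 mat"
  shows "M \<in> carrier_mat n k \<Longrightarrow> j < k \<Longrightarrow> M *\<^sub>v unit_vec k j = col M j"
  by (auto simp: vec_eq_iff)

lemma mult_mat_vec_eq_sum_cols:
  fixes M :: "'a :: comm_semiring_0 mat"
  assumes "M \<in> carrier_mat n k" "v \<in> carrier_vec k"
  shows "M *\<^sub>v v = vec n (\<lambda>i. \<Sum>l<k. v $ l * col M l $ i)"
  using assms by (auto simp: vec_eq_iff scalar_prod_def atLeast0LessThan mult.commute intro!: sum.cong)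

lemma scalar_prod_self_eq_0_iff:
  fixes v :: "real vec"
  assumes "v \<in> carrier_vec n"
  shows "v \<bullet> v = 0 \<longleftrightarrow> v = 0\<^sub>v n"
  using conjugate_square_eq_0_vec[OF assms] by simp

lemma eq_zero_mat_if_gram_zero:
  fixes R :: "real mat"
  assumes R: "R \<in> carrier_mat n k" and RR: "R\<^sup>T * R = 0\<^sub>m k k"
  shows "R = 0\<^sub>m n k"
proof (rule mat_col_eqI)
  fix j assume "j < dim_col (0\<^sub>m n k :: real mat)"
  then have j: "j < k" by simp
  have "col R j \<bullet> col R j = (R\<^sup>T * R) $$ (j, j)" using R j by simp
  also have "\<dots> = 0" using RR j by simp
  finally show "col R j = col (0\<^sub>m n k) j"
    using scalar_prod_self_eq_0_iff[of "col R j" n] R j by auto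
qed (use R in auto)

lemma gram_mat_invertible:
  fixes F :: "real mat"
  assumes F: "F \<in> carrier_mat a r" and ker: "mat_kernel F \<subseteq> {0\<^sub>v r}"
  shows "\<exists>N \<in> carrier_mat r r. N * (F\<^sup>T * F) = 1\<^sub>m r \<and> (F\<^sup>T * F) * N = 1\<^sub>m r"
proof -
  have G: "F\<^sup>T * F \<in> carrier_mat r r" using F by auto
  have "det (F\<^sup>T * F) \<noteq> 0"
  proof
    assume "det (F\<^sup>T * F) = 0"
    then obtain v where v: "v \<in> carrier_vec r" "v \<noteq> 0\<^sub>v r" "(F\<^sup>T * F) *\<^sub>v v = 0\<^sub>v r"
      using det_0_iff_vec_prod_zero_field[OF G] by auto
    have "(F *\<^sub>v v) \<bullet> (F *\<^sub>v v) = (F\<^sup>T *\<^sub>v (F *\<^sub>v v)) \<bullet> v"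
      using transpose_vec_mult_scalar[OF F v(1) mult_mat_vec_carrier[OF F v(1)]] by simp
    also have "F\<^sup>T *\<^sub>v (F *\<^sub>v v) = (F\<^sup>T * F) *\<^sub>v v" using F v by simp
    finally have "(F *\<^sub>v v) \<bullet> (F *\<^sub>v v) = 0" using v by simp
    then have "v \<in> mat_kernel F"
      using F v scalar_prod_self_eq_0_iff[of "F *\<^sub>v v" a] by (auto intro: mat_kernelI)
    then show False using ker v by auto
  qed
  from det_non_zero_imp_unit[OF G this, of "()"]
  show ?thesis unfolding Units_def ring_mat_simps by auto
qed

lemma inverse_of_symmetric_mat_symmetric:
  fixes G N :: "'a :: comm_ring_1 mat"
  assumes "G \<in> carrier_mat r r" "N \<in> carrier_mat r r" "N * G = 1\<^sub>m r" "G * N = 1\<^sub>m r" "G\<^sup>T = G"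
  shows "N\<^sup>T = N"
proof -
  have "N\<^sup>T * G = 1\<^sub>m r"
    using transpose_mult[of G r r N r] assms by simp
  have "N\<^sup>T = N\<^sup>T * (G * N)" using assms by simp
  also have "\<dots> = (N\<^sup>T * G) * N" using assms by (simp add: assoc_mult_mat_dims)
  finally show ?thesis using \<open>N\<^sup>T * G = 1\<^sub>m r\<close> assms by simp
qed

lemma left_inverse_of_trivial_kernel:
  fixes F :: "real mat"
  assumes F: "F \<in> carrier_mat a r" and ker: "mat_kernel F \<subseteq> {0\<^sub>v r}"
  shows "\<exists>L \<in> carrier_mat r a. L * F = 1\<^sub>m r \<and> (F * L)\<^sup>T = F * L"
proof -
  obtain N where N: "N \<in> carrier_mat r r" "N * (F\<^sup>T * F) = 1\<^sub>m r" "(F\<^sup>T * F) * N = 1\<^sub>m r"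
    using gram_mat_invertible[OF F ker] by blast
  have "N\<^sup>T = N"
    by (rule inverse_of_symmetric_mat_symmetric[OF _ N]) (use F in \<open>auto simp: transpose_mult_dims\<close>)
  show ?thesis
  proof (intro bexI conjI)
    show "N * F\<^sup>T * F = 1\<^sub>m r" using N F by (simp add: assoc_mult_mat_dims)
    show "(F * (N * F\<^sup>T))\<^sup>T = F * (N * F\<^sup>T)"
      using N F \<open>N\<^sup>T = N\<close> by (simp add: transpose_mult_dims assoc_mult_mat_dims)
  qed (use N F in auto)
qed

section \<open>Full-rank factorisation\<close>

lemma mem_mat_kernel_transpose_iff:
  "y \<in> mat_kernel C\<^sup>T \<longleftrightarrow> y \<in> carrier_vec (dim_row C) \<and> (\<forall>j < dim_col C. col C j \<bullet> y = 0)"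
  by (auto simp: mat_kernel_def vec_eq_iff)

lemma col_mat_of_cols_subset:
  "set vs \<subseteq> carrier_vec n \<Longrightarrow> j < length vs \<Longrightarrow> col (mat_of_cols n vs) j = vs ! j"
  using col_mat_of_cols nth_mem by blast

lemma mult_col_eq_nth_if_mat_of_cols_eq:
  assumes "set cs \<subseteq> carrier_vec a" "mat_of_cols a cs = F * C"
    and "F \<in> carrier_mat a r" "C \<in> carrier_mat r (length cs)" "j < length cs"
  shows "F *\<^sub>v col C j = cs ! j"
proof -
  have "cs ! j = col (mat_of_cols a cs) j" by (rule col_mat_of_cols_subset[symmetric, OF assms(1,5)])
  also have "\<dots> = F *\<^sub>v col C j" unfolding assms(2) by (rule col_mult2[OF assms(3-5)])
  finally show ?thesis by simp
qed

lemma mat_of_cols_snoc_mult_vec: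
  fixes ws :: "'a :: comm_semiring_1 vec list"
  assumes ws: "set ws \<subseteq> carrier_vec a" and x: "x \<in> carrier_vec (Suc (length ws))"
    and c: "c \<in> carrier_vec a"
  shows "mat_of_cols a (ws @ [c]) *\<^sub>v x
    = mat_of_cols a ws *\<^sub>v vec_first x (length ws) + x $ length ws \<cdot>\<^sub>v c"
proof (rule eq_vecI)
  fix i assume "i < dim_vec (mat_of_cols a ws *\<^sub>v vec_first x (length ws) + x $ length ws \<cdot>\<^sub>v c)"
  then have i: "i < a" using c by simp
  then show "(mat_of_cols a (ws @ [c]) *\<^sub>v x) $ i
      = (mat_of_cols a ws *\<^sub>v vec_first x (length ws) + x $ length ws \<cdot>\<^sub>v c) $ i"
    using x c by (auto simp: scalar_prod_def mat_of_cols_index nth_append vec_first_def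
        atLeast0_lessThan_Suc ac_simps intro!: sum.cong)
qed (use c in simp)

lemma eq_zero_vec_if_vec_first_zero:
  assumes "x \<in> carrier_vec (Suc r)" "vec_first x r = 0\<^sub>v r" "x $ r = 0"
  shows "x = 0\<^sub>v (Suc r)"
proof (rule eq_vecI)
  fix l assume "l < dim_vec (0\<^sub>v (Suc r) :: 'a vec)"
  then show "x $ l = 0\<^sub>v (Suc r) $ l"
    using assms by (auto simp: vec_first_def vec_eq_iff less_Suc_eq)
qed (use assms in simp)

definition extend_zero :: "nat \<Rightarrow> 'a :: zero vec \<Rightarrow> 'a vec" where
  "extend_zero r v = vec (Suc r) (\<lambda>l. if l < r then v $ l else 0)"

lemma extend_zero_carrier [simp]: "extend_zero r v \<in> carrier_vec (Suc r)"
  by (simp add: extend_zero_def)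

lemma extend_zero_last [simp]: "extend_zero r v $ r = 0"
  by (simp add: extend_zero_def)

lemma vec_first_extend_zero [simp]: "v \<in> carrier_vec r \<Longrightarrow> vec_first (extend_zero r v) r = v"
  by (auto simp: extend_zero_def vec_first_def vec_eq_iff)

lemma vec_first_unit_vec_last [simp]: "vec_first (unit_vec (Suc r) r) r = 0\<^sub>v r"
  by (auto simp: vec_first_def vec_eq_iff)

lemma scalar_prod_extend_zero:
  assumes "v \<in> carrier_vec r" "y \<in> carrier_vec (Suc r)"
  shows "extend_zero r v \<bullet> y = v \<bullet> vec_first y r"
  using assms
  by (auto simp: extend_zero_def scalar_prod_def vec_first_def atLeast0_lessThan_Suc intro!: sum.cong)

lemma factorization_snoc_in_range:
  fixes F C :: "real mat"
  assumes F: "F \<in> carrier_mat a r" and C: "C \<in> carrier_mat r (length cs)"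
    and cs: "set cs \<subseteq> carrier_vec a" "mat_of_cols a cs = F * C"
    and kerC: "mat_kernel C\<^sup>T \<subseteq> {0\<^sub>v r}" and w: "w \<in> carrier_vec r"
  defines "C' \<equiv> mat_of_cols r (cols C @ [w])"
  shows "mat_of_cols a (cs @ [F *\<^sub>v w]) = F * C'" and "mat_kernel C'\<^sup>T \<subseteq> {0\<^sub>v r}"
proof -
  have cols_C: "set (cols C) \<subseteq> carrier_vec r" using cols_dim[of C] C by simp
  have C': "C' \<in> carrier_mat r (Suc (length cs))" unfolding C'_def using C by auto
  have col_C': "col C' j = (if j < length cs then col C j else w)" if "j < Suc (length cs)" for j
    using that C cols_C w unfolding C'_def by (auto simp: col_mat_of_cols_subset nth_append)
  show "mat_of_cols a (cs @ [F *\<^sub>v w]) = F * C'"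
  proof (rule mat_col_eqI)
    fix j assume "j < dim_col (F * C')"
    then have j: "j < Suc (length cs)" using C' by simp
    have "col (F * C') j = F *\<^sub>v col C' j" by (rule col_mult2[OF F C' j])
    then show "col (mat_of_cols a (cs @ [F *\<^sub>v w])) j = col (F * C') j"
      using j F cs w mult_col_eq_nth_if_mat_of_cols_eq[OF cs F C, of j]
      by (auto simp: col_mat_of_cols_subset col_C' nth_append less_Suc_eq)
  qed (use F C' in auto)
  show "mat_kernel C'\<^sup>T \<subseteq> {0\<^sub>v r}"
  proof
    fix y assume y: "y \<in> mat_kernel C'\<^sup>T"
    have "col C j \<bullet> y = 0" if j: "j < length cs" for j
      using y C' col_C'[OF less_SucI[OF j]] j
      unfolding mem_mat_kernel_transpose_iff by (metis carrier_matD(2) less_SucI)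
    then have "y \<in> mat_kernel C\<^sup>T" using y C C' unfolding mem_mat_kernel_transpose_iff by auto
    then show "y \<in> {0\<^sub>v r}" using kerC by auto
  qed
qed

lemma mat_kernel_snoc_trivial:
  fixes F :: "real mat"
  assumes F: "F \<in> carrier_mat a r" and kerF: "mat_kernel F \<subseteq> {0\<^sub>v r}"
    and c: "c \<in> carrier_vec a" and new: "\<not> (\<exists>w \<in> carrier_vec r. c = F *\<^sub>v w)"
  shows "mat_kernel (mat_of_cols a (cols F @ [c])) \<subseteq> {0\<^sub>v (Suc r)}"
proof
  fix x assume "x \<in> mat_kernel (mat_of_cols a (cols F @ [c]))"
  then have x: "x \<in> carrier_vec (Suc r)" and "F *\<^sub>v vec_first x r + x $ r \<cdot>\<^sub>v c = 0\<^sub>v a"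
    using mat_of_cols_snoc_mult_vec[of "cols F" a x c] F c by (auto simp: mat_kernel_def)
  then have Fx: "F *\<^sub>v vec_first x r = - x $ r \<cdot>\<^sub>v c"
    using F c by (auto simp: vec_eq_iff algebra_simps)
  have "x $ r = 0"
  proof (rule ccontr)
    assume "x $ r \<noteq> 0"
    then have "c = F *\<^sub>v (- (1 / x $ r) \<cdot>\<^sub>v vec_first x r)"
      using Fx F c by (simp add: mult_mat_vec[OF F] vec_eq_iff)
    then show False using new F by auto
  qed
  then have "vec_first x r \<in> mat_kernel F"
    using Fx F c by (intro mat_kernelI[OF F]) (auto simp: vec_eq_iff)
  then show "x \<in> {0\<^sub>v (Suc r)}"
    using kerF eq_zero_vec_if_vec_first_zero[OF x] \<open>x $ r = 0\<close> by auto
qed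

text \<open>The block matrix with diagonal blocks \<open>C\<close> and \<open>1\<close>.\<close>
definition extend_unit :: "real mat \<Rightarrow> real mat" where
  "extend_unit C = mat_of_cols (Suc (dim_row C))
     (map (extend_zero (dim_row C)) (cols C) @ [unit_vec (Suc (dim_row C)) (dim_row C)])"

lemma extend_unit_carrier: "C \<in> carrier_mat r b \<Longrightarrow> extend_unit C \<in> carrier_mat (Suc r) (Suc b)"
  by (auto simp: extend_unit_def)

lemma col_extend_unit:
  assumes "C \<in> carrier_mat r b" "j < Suc b"
  shows "col (extend_unit C) j = (if j < b then extend_zero r (col C j) else unit_vec (Suc r) r)"
proof -
  have "set (cols C) \<subseteq> carrier_vec r" using cols_dim[of C] assms(1) by simp
  then show ?thesis using assms by (auto simp: extend_unit_def col_mat_of_cols_subset nth_append)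
qed

lemma mat_kernel_transpose_extend_unit:
  assumes C: "C \<in> carrier_mat r b" and kerC: "mat_kernel C\<^sup>T \<subseteq> {0\<^sub>v r}"
  shows "mat_kernel (extend_unit C)\<^sup>T \<subseteq> {0\<^sub>v (Suc r)}"
proof
  fix y assume y: "y \<in> mat_kernel (extend_unit C)\<^sup>T"
  have C': "extend_unit C \<in> carrier_mat (Suc r) (Suc b)" by (rule extend_unit_carrier[OF C])
  then have y_carrier: "y \<in> carrier_vec (Suc r)" using y by (simp add: mat_kernel_def)
  have "col C j \<bullet> vec_first y r = 0" if j: "j < b" for j
    using y C' col_extend_unit[OF C less_SucI[OF j]] j C y_carrier scalar_prod_extend_zero[of "col C j" r y]
    unfolding mem_mat_kernel_transpose_iff by (metis carrier_matD less_SucI col_dim)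
  then have "vec_first y r \<in> mat_kernel C\<^sup>T" using C unfolding mem_mat_kernel_transpose_iff by auto
  moreover have "y $ r = 0"
    using y C' col_extend_unit[OF C, of b] y_carrier unfolding mem_mat_kernel_transpose_iff by auto
  ultimately show "y \<in> {0\<^sub>v (Suc r)}"
    using kerC eq_zero_vec_if_vec_first_zero[OF y_carrier] by auto
qed

lemma factorization_snoc_new_col:
  fixes F C :: "real mat"
  assumes F: "F \<in> carrier_mat a r" and C: "C \<in> carrier_mat r (length cs)"
    and cs: "set cs \<subseteq> carrier_vec a" "mat_of_cols a cs = F * C" and c: "c \<in> carrier_vec a"
  shows "mat_of_cols a (cs @ [c]) = mat_of_cols a (cols F @ [c]) * extend_unit C"
proof (rule mat_col_eqI)
  let ?F' = "mat_of_cols a (cols F @ [c])"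
  have F': "?F' \<in> carrier_mat a (Suc r)" using F by auto
  have C': "extend_unit C \<in> carrier_mat (Suc r) (Suc (length cs))" by (rule extend_unit_carrier[OF C])
  have F'_mult: "?F' *\<^sub>v x = F *\<^sub>v vec_first x r + x $ r \<cdot>\<^sub>v c" if "x \<in> carrier_vec (Suc r)" for x
    using mat_of_cols_snoc_mult_vec[of "cols F" a x c] that F c by auto
  fix j assume "j < dim_col (?F' * extend_unit C)"
  then have j: "j < Suc (length cs)" using C' by simp
  have "?F' *\<^sub>v col (extend_unit C) j = (cs @ [c]) ! j"
  proof (cases "j < length cs")
    case True
    have "?F' *\<^sub>v extend_zero r (col C j) = F *\<^sub>v col C j"
      using F'_mult[of "extend_zero r (col C j)"] F C c by (auto simp: vec_eq_iff)
    then show ?thesis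
      using True col_extend_unit[OF C j] mult_col_eq_nth_if_mat_of_cols_eq[OF cs F C True]
      by (simp add: nth_append)
  next
    case False
    then have "j = length cs" using j by simp
    then show ?thesis using col_extend_unit[OF C j] F'_mult[of "unit_vec (Suc r) r"] F c by auto
  qed
  then show "col (mat_of_cols a (cs @ [c])) j = col (?F' * extend_unit C) j"
    using col_mult2[OF F' C' j] j cs c by (simp add: col_mat_of_cols_subset)
qed (use C extend_unit_carrier[OF C] in auto)

lemma full_rank_factorization_cols:
  fixes cs :: "real vec list"
  assumes "set cs \<subseteq> carrier_vec a"
  shows "\<exists>r F C. F \<in> carrier_mat a r \<and> C \<in> carrier_mat r (length cs) \<and> mat_of_cols a cs = F * C
    \<and> mat_kernel F \<subseteq> {0\<^sub>v r} \<and> mat_kernel C\<^sup>T \<subseteq> {0\<^sub>v r}"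
  using assms
proof (induction cs rule: rev_induct)
  case Nil
  show ?case
    by (rule exI[of _ 0], rule exI[of _ "0\<^sub>m a 0"], rule exI[of _ "0\<^sub>m 0 0"]) (auto simp: mat_kernel_def)
next
  case (snoc c cs)
  then have c: "c \<in> carrier_vec a" and cs: "set cs \<subseteq> carrier_vec a" by auto
  with snoc.IH obtain r F C where F: "F \<in> carrier_mat a r" and C: "C \<in> carrier_mat r (length cs)"
    and FC: "mat_of_cols a cs = F * C"
    and kerF: "mat_kernel F \<subseteq> {0\<^sub>v r}" and kerC: "mat_kernel C\<^sup>T \<subseteq> {0\<^sub>v r}" by auto
  show ?case
  proof (cases "\<exists>w \<in> carrier_vec r. c = F *\<^sub>v w")
    case True
    then obtain w where w: "w \<in> carrier_vec r" and "c = F *\<^sub>v w" by blast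
    then show ?thesis
      using factorization_snoc_in_range[OF F C cs FC kerC w] F C kerF
      by (intro exI[of _ r] exI[of _ F] exI[of _ "mat_of_cols r (cols C @ [w])"]) auto
  next
    case False
    have "mat_of_cols a (cols F @ [c]) \<in> carrier_mat a (Suc r)" using F by auto
    then show ?thesis
      using factorization_snoc_new_col[OF F C cs FC c] mat_kernel_snoc_trivial[OF F kerF c False]
        mat_kernel_transpose_extend_unit[OF C kerC] extend_unit_carrier[OF C]
      by (intro exI[of _ "Suc r"]) auto
  qed
qed

section \<open>The Moore--Penrose inverse\<close>

definition moore_penrose :: "real mat \<Rightarrow> real mat \<Rightarrow> bool" where
  "moore_penrose M X \<longleftrightarrow> X \<in> carrier_mat (dim_col M) (dim_row M) \<and> M * X * M = M \<and> X * M * X = X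
    \<and> (M * X)\<^sup>T = M * X \<and> (X * M)\<^sup>T = X * M"

lemma moore_penrose_of_factorization:
  assumes F: "F \<in> carrier_mat a r" and C: "C \<in> carrier_mat r b"
    and L: "L \<in> carrier_mat r a" "L * F = 1\<^sub>m r" "(F * L)\<^sup>T = F * L"
    and R: "R \<in> carrier_mat b r" "C * R = 1\<^sub>m r" "(R * C)\<^sup>T = R * C"
  shows "moore_penrose (F * C) (R * L)"
proof -
  note dims = carrier_matD[OF F] carrier_matD[OF C] carrier_matD[OF L(1)] carrier_matD[OF R(1)]
  have MX: "F * C * (R * L) = F * L"
  proof -
    have "F * C * (R * L) = F * (C * R) * L" using dims by (simp add: assoc_mult_mat_dims)
    then show ?thesis using R(2) F by simp
  qed
  have XM: "R * L * (F * C) = R * C"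
  proof -
    have "R * L * (F * C) = R * (L * F) * C" using dims by (simp add: assoc_mult_mat_dims)
    then show ?thesis using L(2) R(1) by simp
  qed
  have "F * C * (R * L) * (F * C) = F * C"
  proof -
    have "F * L * (F * C) = F * (L * F) * C" using dims by (simp add: assoc_mult_mat_dims)
    then show ?thesis unfolding MX using L(2) F by simp
  qed
  moreover have "R * L * (F * C) * (R * L) = R * L"
  proof -
    have "R * C * (R * L) = R * (C * R) * L" using dims by (simp add: assoc_mult_mat_dims)
    then show ?thesis unfolding XM using R(2) R(1) by simp
  qed
  ultimately show ?thesis
    unfolding moore_penrose_def MX XM using F C L R by auto
qed

lemma moore_penrose_exists:
  assumes "M \<in> carrier_mat a b"
  shows "\<exists>X. moore_penrose M X"
proof -
  have "set (cols M) \<subseteq> carrier_vec a" using cols_dim[of M] assms by simp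
  from full_rank_factorization_cols[OF this] obtain r F C
    where F: "F \<in> carrier_mat a r" and C: "C \<in> carrier_mat r b" and M: "M = F * C"
    and kerF: "mat_kernel F \<subseteq> {0\<^sub>v r}" and kerC: "mat_kernel C\<^sup>T \<subseteq> {0\<^sub>v r}"
    using assms mat_of_cols_cols[of M] by auto
  obtain L where L: "L \<in> carrier_mat r a" "L * F = 1\<^sub>m r" "(F * L)\<^sup>T = F * L"
    using left_inverse_of_trivial_kernel[OF F kerF] by blast
  obtain L' where L': "L' \<in> carrier_mat r b" "L' * C\<^sup>T = 1\<^sub>m r" "(C\<^sup>T * L')\<^sup>T = C\<^sup>T * L'"
    using left_inverse_of_trivial_kernel[of "C\<^sup>T" b r] C kerC by auto
  have "C * L'\<^sup>T = (L' * C\<^sup>T)\<^sup>T" using L'(1) C by (simp add: transpose_mult_dims)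
  also have "\<dots> = 1\<^sub>m r" using L'(2) by simp
  finally have "C * L'\<^sup>T = 1\<^sub>m r" .
  moreover have "(L'\<^sup>T * C)\<^sup>T = L'\<^sup>T * C" using L' C by (simp add: transpose_mult_dims)
  ultimately show ?thesis
    unfolding M using moore_penrose_of_factorization[OF F C L, of "L'\<^sup>T"] L' by auto
qed

lemma moore_penrose_unique:
  assumes X: "moore_penrose M X" and Y: "moore_penrose M Y"
  shows "X = Y"
proof -
  have "X \<in> carrier_mat (dim_col M) (dim_row M)" "Y \<in> carrier_mat (dim_col M) (dim_row M)"
    using X Y unfolding moore_penrose_def by auto
  note dims = this[THEN carrier_matD(1)] this[THEN carrier_matD(2)]
  have x1: "M * (X * M) = M" and x2: "X * (M * X) = X" and x3: "X\<^sup>T * M\<^sup>T = M * X"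
    and x4: "M\<^sup>T * X\<^sup>T = X * M"
    using X dims unfolding moore_penrose_def by (simp_all add: assoc_mult_mat_dims transpose_mult_dims)
  have y1: "M * (Y * M) = M" and y2: "Y * (M * Y) = Y" and y3: "Y\<^sup>T * M\<^sup>T = M * Y"
    and y4: "M\<^sup>T * Y\<^sup>T = Y * M"
    using Y dims unfolding moore_penrose_def by (simp_all add: assoc_mult_mat_dims transpose_mult_dims)
  have Mt_Y: "M\<^sup>T = M\<^sup>T * (M * Y)"
  proof -
    have "M\<^sup>T = (M * (Y * M))\<^sup>T" using y1 by simp
    also have "\<dots> = M\<^sup>T * (Y\<^sup>T * M\<^sup>T)" using dims by (simp add: assoc_mult_mat_dims transpose_mult_dims)
    finally show ?thesis unfolding y3 .
  qed
  have Mt_X: "M\<^sup>T = (X * M) * M\<^sup>T"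
  proof -
    have "M\<^sup>T = ((M * X) * M)\<^sup>T" using x1 dims by (simp add: assoc_mult_mat_dims)
    also have "\<dots> = (M\<^sup>T * X\<^sup>T) * M\<^sup>T" using dims by (simp add: transpose_mult_dims assoc_mult_mat_dims)
    finally show ?thesis unfolding x4 .
  qed
  have "X = X * (X\<^sup>T * M\<^sup>T)" using x2 x3 by simp
  also have "\<dots> = X * (X\<^sup>T * (M\<^sup>T * (M * Y)))" by (simp only: Mt_Y[symmetric])
  also have "\<dots> = X * ((X\<^sup>T * M\<^sup>T) * (M * Y))" using dims by (simp add: assoc_mult_mat_dims)
  also have "\<dots> = (X * (M * X)) * M * Y" unfolding x3 using dims by (simp add: assoc_mult_mat_dims)
  finally have X_eq: "X = X * M * Y" unfolding x2 .
  have "Y = (Y * M) * Y" using y2 dims by (simp add: assoc_mult_mat_dims)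
  also have "\<dots> = ((X * M) * M\<^sup>T * Y\<^sup>T) * Y" unfolding y4[symmetric] by (simp only: Mt_X[symmetric])
  also have "\<dots> = X * M * (Y * (M * Y))" unfolding y4[symmetric]
    using dims by (simp add: assoc_mult_mat_dims y4)
  finally show ?thesis unfolding y2 using X_eq by simp
qed

lemma pinv_moore_penrose:
  assumes "M \<in> carrier_mat a b"
  shows "moore_penrose M (pinv M)"
proof -
  have "\<exists>!X. moore_penrose M X" using moore_penrose_exists[OF assms] moore_penrose_unique by blast
  then show ?thesis unfolding pinv_def moore_penrose_def[symmetric] by (rule theI')
qed

lemma pinv_carrier: "M \<in> carrier_mat a b \<Longrightarrow> pinv M \<in> carrier_mat b a"
  using pinv_moore_penrose by (auto simp: moore_penrose_def)

lemma mult_generalized_inverse_gram_mat: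
  fixes Q Y :: "real mat"
  assumes Q: "Q \<in> carrier_mat n k" and Y: "Y \<in> carrier_mat k k"
    and GYG: "Q\<^sup>T * Q * Y * (Q\<^sup>T * Q) = Q\<^sup>T * Q"
  shows "Q * Y * (Q\<^sup>T * Q) = Q"
proof -
  define R where "R = Q * Y * (Q\<^sup>T * Q) - Q"
  have R: "R \<in> carrier_mat n k" unfolding R_def using Q Y by auto
  have QR: "Q\<^sup>T * R = 0\<^sub>m k k"
  proof -
    have "Q\<^sup>T * R = Q\<^sup>T * (Q * Y * (Q\<^sup>T * Q)) - Q\<^sup>T * Q"
      unfolding R_def using Q Y by (subst mult_minus_distrib_mat[of _ k n]) auto
    also have "Q\<^sup>T * (Q * Y * (Q\<^sup>T * Q)) = Q\<^sup>T * Q * Y * (Q\<^sup>T * Q)"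
      using Q Y by (simp add: assoc_mult_mat_dims)
    finally show ?thesis unfolding GYG using Q by simp
  qed
  have "R\<^sup>T = (Q * Y * (Q\<^sup>T * Q))\<^sup>T - Q\<^sup>T" unfolding R_def using Q Y by (intro eq_matI) auto
  moreover have "(Q * Y * (Q\<^sup>T * Q))\<^sup>T \<in> carrier_mat k n" using Q Y by auto
  ultimately have "R\<^sup>T * R = (Q * Y * (Q\<^sup>T * Q))\<^sup>T * R - Q\<^sup>T * R"
    using Q R by (simp add: minus_mult_distrib_mat[of _ k n _ _ k])
  also have "(Q * Y * (Q\<^sup>T * Q))\<^sup>T * R = (Q\<^sup>T * Q) * Y\<^sup>T * (Q\<^sup>T * R)"
    using Q Y R by (simp add: transpose_mult_dims assoc_mult_mat_dims)
  finally have "R\<^sup>T * R = 0\<^sub>m k k" unfolding QR using Q Y by simp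
  then have "R = 0\<^sub>m n k" by (rule eq_zero_mat_if_gram_zero[OF R])
  then show ?thesis unfolding R_def using Q Y by (auto simp: mat_eq_iff)
qed

lemma mult_pinv_gram_mat:
  fixes Q :: "real mat"
  assumes Q: "Q \<in> carrier_mat n k"
  shows "Q * pinv (Q\<^sup>T * Q) * (Q\<^sup>T * Q) = Q"
  using pinv_moore_penrose[of "Q\<^sup>T * Q" k k] Q
  by (intro mult_generalized_inverse_gram_mat[OF Q]) (auto simp: moore_penrose_def)

lemma gram_mat_mult_pinv:
  fixes Q :: "real mat"
  assumes Q: "Q \<in> carrier_mat n k"
  shows "Q\<^sup>T * Q * pinv (Q\<^sup>T * Q) * Q\<^sup>T = Q\<^sup>T"
proof -
  let ?G = "Q\<^sup>T * Q" and ?X = "pinv (Q\<^sup>T * Q)"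
  have X: "?X \<in> carrier_mat k k" and GXG: "?G * ?X * ?G = ?G"
    using pinv_moore_penrose[of ?G k k] Q by (auto simp: moore_penrose_def)
  \<comment> \<open>\<open>G\<close> is symmetric, so \<open>X\<^sup>T\<close> is a generalised inverse of \<open>G\<close> as well.\<close>
  have "?G * ?X\<^sup>T * ?G = ?G"
    using arg_cong[OF GXG, of transpose_mat] X Q by (simp add: transpose_mult_dims assoc_mult_mat_dims)
  then have "Q * ?X\<^sup>T * ?G = Q" using mult_generalized_inverse_gram_mat[OF Q] X by auto
  then have "(Q * ?X\<^sup>T * ?G)\<^sup>T = Q\<^sup>T" by simp
  then show ?thesis using X Q by (simp add: transpose_mult_dims assoc_mult_mat_dims)
qed

section \<open>Decomposition of the iterates\<close>

lemma gram_inverse_mult_col_space: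
  fixes Q X :: "real mat"
  assumes Q: "Q \<in> carrier_mat n k" and X: "X \<in> carrier_mat k k"
    and QXG: "Q * X * (Q\<^sup>T * Q) = Q" and v: "v \<in> carrier_vec k"
  shows "(Q * X) *\<^sub>v (Q\<^sup>T *\<^sub>v (Q *\<^sub>v v)) = Q *\<^sub>v v"
proof -
  have "(Q * X) *\<^sub>v (Q\<^sup>T *\<^sub>v (Q *\<^sub>v v)) = (Q * X * (Q\<^sup>T * Q)) *\<^sub>v v"
    using Q X v by (simp add: assoc_mult_mat_dims assoc_mult_mat_vec_dims)
  then show ?thesis unfolding QXG .
qed

lemma transpose_mult_gram_residual:
  fixes Q X :: "real mat"
  assumes Q: "Q \<in> carrier_mat n k" and X: "X \<in> carrier_mat k k"
    and GXQ: "Q\<^sup>T * Q * X * Q\<^sup>T = Q\<^sup>T" and q: "q \<in> carrier_vec n"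
  shows "Q\<^sup>T *\<^sub>v (q - Q *\<^sub>v (X *\<^sub>v (Q\<^sup>T *\<^sub>v q))) = 0\<^sub>v k"
proof -
  have "Q\<^sup>T *\<^sub>v (Q *\<^sub>v (X *\<^sub>v (Q\<^sup>T *\<^sub>v q))) = (Q\<^sup>T * Q * X * Q\<^sup>T) *\<^sub>v q"
    using Q X q by (simp add: assoc_mult_mat_dims assoc_mult_mat_vec_dims)
  then have "Q\<^sup>T *\<^sub>v (Q *\<^sub>v (X *\<^sub>v (Q\<^sup>T *\<^sub>v q))) = Q\<^sup>T *\<^sub>v q" unfolding GXQ .
  then show ?thesis
    using mult_minus_distrib_mat_vec[of "Q\<^sup>T" k n q "Q *\<^sub>v (X *\<^sub>v (Q\<^sup>T *\<^sub>v q))"] Q X q by simp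
qed

lemma transpose_mult_transpose_if_orthogonal:
  fixes A Q U S :: "real mat"
  assumes A: "A \<in> carrier_mat n n" and Q: "Q \<in> carrier_mat n k" and U: "U \<in> carrier_mat n k"
    and S: "S \<in> carrier_mat k k" and AQ: "A * Q = U + \<rho> \<cdot>\<^sub>m (Q * S)"
    and r: "r \<in> carrier_vec n" and Qr: "Q\<^sup>T *\<^sub>v r = 0\<^sub>v k"
  shows "Q\<^sup>T *\<^sub>v (A\<^sup>T *\<^sub>v r) = U\<^sup>T *\<^sub>v r"
proof -
  have "Q\<^sup>T *\<^sub>v (A\<^sup>T *\<^sub>v r) = (A * Q)\<^sup>T *\<^sub>v r"
    using A Q r by (simp add: transpose_mult_dims assoc_mult_mat_vec_dims)
  also have "(A * Q)\<^sup>T = U\<^sup>T + \<rho> \<cdot>\<^sub>m (S\<^sup>T * Q\<^sup>T)"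
    unfolding AQ using U Q S by (simp add: transpose_add[of _ n k] transpose_smult_mat transpose_mult_dims)
  also have "(U\<^sup>T + \<rho> \<cdot>\<^sub>m (S\<^sup>T * Q\<^sup>T)) *\<^sub>v r = U\<^sup>T *\<^sub>v r + \<rho> \<cdot>\<^sub>v (S\<^sup>T *\<^sub>v (Q\<^sup>T *\<^sub>v r))"
    using U Q S r by (simp add: add_mult_distrib_mat_vec[of _ k n] smult_mat_mult_mat_vec[of _ k n])
  also have "\<dots> = U\<^sup>T *\<^sub>v r"
    unfolding Qr using S U r by (simp add: mult_mat_vec_zero[of _ k k] vec_eq_iff)
  finally show ?thesis .
qed

lemma gram_inverse_mult_v_combination:
  fixes Q U S X :: "real mat"
  assumes Q: "Q \<in> carrier_mat n k" and U: "U \<in> carrier_mat n k"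
    and S: "S \<in> carrier_mat k k" and X: "X \<in> carrier_mat k k" and QXG: "Q * X * (Q\<^sup>T * Q) = Q"
    and q: "q \<in> carrier_vec n" and e: "e \<in> carrier_vec k" and \<alpha>: "\<alpha> \<in> carrier_vec k"
  shows "(Q * X) *\<^sub>v (U\<^sup>T *\<^sub>v q - d \<cdot>\<^sub>v (Q\<^sup>T *\<^sub>v (Q *\<^sub>v e)) - (U\<^sup>T * Q - Q\<^sup>T * (Q * S)) *\<^sub>v \<alpha>)
    = (Q * X) *\<^sub>v (U\<^sup>T *\<^sub>v (q - Q *\<^sub>v \<alpha>)) - d \<cdot>\<^sub>v (Q *\<^sub>v e) + Q *\<^sub>v (S *\<^sub>v \<alpha>)"
proof -
  have QX: "Q * X \<in> carrier_mat n k" using Q X by auto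
  have "(U\<^sup>T * Q - Q\<^sup>T * (Q * S)) *\<^sub>v \<alpha> = U\<^sup>T *\<^sub>v (Q *\<^sub>v \<alpha>) - Q\<^sup>T *\<^sub>v (Q *\<^sub>v (S *\<^sub>v \<alpha>))"
    using U Q S \<alpha> by (simp add: minus_mult_distrib_mat_vec[of _ k k] assoc_mult_mat_vec_dims)
  then have lhs: "(Q * X) *\<^sub>v (U\<^sup>T *\<^sub>v q - d \<cdot>\<^sub>v (Q\<^sup>T *\<^sub>v (Q *\<^sub>v e)) - (U\<^sup>T * Q - Q\<^sup>T * (Q * S)) *\<^sub>v \<alpha>)
      = (Q * X) *\<^sub>v (U\<^sup>T *\<^sub>v q) - d \<cdot>\<^sub>v (Q *\<^sub>v e)
        - ((Q * X) *\<^sub>v (U\<^sup>T *\<^sub>v (Q *\<^sub>v \<alpha>)) - Q *\<^sub>v (S *\<^sub>v \<alpha>))"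
    using QX U Q S \<alpha> q e gram_inverse_mult_col_space[OF Q X QXG]
    by (simp add: mult_minus_distrib_mat_vec[OF QX] mult_mat_vec[OF QX])
  have rhs: "(Q * X) *\<^sub>v (U\<^sup>T *\<^sub>v (q - Q *\<^sub>v \<alpha>))
      = (Q * X) *\<^sub>v (U\<^sup>T *\<^sub>v q) - (Q * X) *\<^sub>v (U\<^sup>T *\<^sub>v (Q *\<^sub>v \<alpha>))"
    using QX U Q q \<alpha> by (simp add: mult_minus_distrib_mat_vec)
  show ?thesis unfolding lhs rhs using QX U Q S \<alpha> q e by (auto simp: vec_eq_iff)
qed

lemma amp_iterate_decomposition:
  fixes A Q U S X :: "real mat" and q e :: "real vec" and \<rho> d :: real
  assumes A: "A \<in> carrier_mat n n" and Q: "Q \<in> carrier_mat n k" and U: "U \<in> carrier_mat n k"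
    and S: "S \<in> carrier_mat k k" and X: "X \<in> carrier_mat k k"
    and QXG: "Q * X * (Q\<^sup>T * Q) = Q" and GXQ: "Q\<^sup>T * Q * X * Q\<^sup>T = Q\<^sup>T"
    and AQ: "A * Q = U + \<rho> \<cdot>\<^sub>m (Q * S)"
    and q: "q \<in> carrier_vec n" and e: "e \<in> carrier_vec k"
  defines "\<alpha> \<equiv> X *\<^sub>v (Q\<^sup>T *\<^sub>v q)" and "P \<equiv> Q * X * Q\<^sup>T"
  shows "A *\<^sub>v q - (\<rho> * d) \<cdot>\<^sub>v (Q *\<^sub>v e) = U *\<^sub>v \<alpha>
    + \<rho> \<cdot>\<^sub>v ((Q * X) *\<^sub>v (U\<^sup>T *\<^sub>v q - d \<cdot>\<^sub>v (Q\<^sup>T *\<^sub>v (Q *\<^sub>v e))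
        - (U\<^sup>T * Q - Q\<^sup>T * (Q * S)) *\<^sub>v \<alpha>))
    + (A - \<rho> \<cdot>\<^sub>m (P * A\<^sup>T)) *\<^sub>v ((1\<^sub>m n - P) *\<^sub>v q)"
proof -
  define r where "r = q - Q *\<^sub>v \<alpha>"
  have \<alpha>: "\<alpha> \<in> carrier_vec k" unfolding \<alpha>_def using X Q q by auto
  have r: "r \<in> carrier_vec n" unfolding r_def using q Q \<alpha> by auto
  have P: "P \<in> carrier_mat n n" unfolding P_def using Q X by auto
  have P_mult: "P *\<^sub>v v = (Q * X) *\<^sub>v (Q\<^sup>T *\<^sub>v v)" if "v \<in> carrier_vec n" for v
    unfolding P_def using Q X that by (simp add: assoc_mult_mat_vec_dims)
  have "(1\<^sub>m n - P) *\<^sub>v q = 1\<^sub>m n *\<^sub>v q - P *\<^sub>v q"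
    by (rule minus_mult_distrib_mat_vec[OF one_carrier_mat P q])
  also have "\<dots> = r" unfolding r_def \<alpha>_def P_mult[OF q] using Q X q by simp
  finally have P_perp_q: "(1\<^sub>m n - P) *\<^sub>v q = r" .
  have "Q\<^sup>T *\<^sub>v r = 0\<^sub>v k"
    unfolding r_def \<alpha>_def by (rule transpose_mult_gram_residual[OF Q X GXQ q])
  then have P_At_r: "P *\<^sub>v (A\<^sup>T *\<^sub>v r) = (Q * X) *\<^sub>v (U\<^sup>T *\<^sub>v r)"
    using P_mult[of "A\<^sup>T *\<^sub>v r"] transpose_mult_transpose_if_orthogonal[OF A Q U S AQ r] A r by simp
  have "A *\<^sub>v (Q *\<^sub>v \<alpha>) = (U + \<rho> \<cdot>\<^sub>m (Q * S)) *\<^sub>v \<alpha>"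
    unfolding AQ[symmetric] using A Q \<alpha> by simp
  also have "\<dots> = U *\<^sub>v \<alpha> + \<rho> \<cdot>\<^sub>v (Q *\<^sub>v (S *\<^sub>v \<alpha>))"
    using U Q S \<alpha> by (simp add: add_mult_distrib_mat_vec[of _ n k] smult_mat_mult_mat_vec[of _ n k])
  finally have A_Q\<alpha>: "A *\<^sub>v (Q *\<^sub>v \<alpha>) = U *\<^sub>v \<alpha> + \<rho> \<cdot>\<^sub>v (Q *\<^sub>v (S *\<^sub>v \<alpha>))" .
  have A_r: "A *\<^sub>v r = A *\<^sub>v q - U *\<^sub>v \<alpha> - \<rho> \<cdot>\<^sub>v (Q *\<^sub>v (S *\<^sub>v \<alpha>))"
    unfolding r_def mult_minus_distrib_mat_vec[OF A q mult_mat_vec_carrier[OF Q \<alpha>]] A_Q\<alpha>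
    using A q Q \<alpha> U S by (simp add: vec_eq_iff)
  have Ik_r: "(A - \<rho> \<cdot>\<^sub>m (P * A\<^sup>T)) *\<^sub>v r = A *\<^sub>v r - \<rho> \<cdot>\<^sub>v (P *\<^sub>v (A\<^sup>T *\<^sub>v r))"
    using A P r by (simp add: minus_mult_distrib_mat_vec[of _ n n] smult_mat_mult_mat_vec[of _ n n])
  show ?thesis
    unfolding gram_inverse_mult_v_combination[OF Q U S X QXG q e \<alpha>] r_def[symmetric]
      P_perp_q Ik_r P_At_r A_r
    using Q X U S A \<alpha> q e r by (simp add: vec_eq_iff algebra_simps)
qed

lemma qv_carrier [simp]: "qv h u B l \<in> carrier_vec (dim_row B)"
  by (simp add: qv_def happ_def)

lemma dim_qv [simp]: "dim_vec (qv h u B l) = dim_row B"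
  by (simp add: qv_def happ_def)

lemma qprev_carrier [simp]: "qprev h u B l \<in> carrier_vec (dim_row B)"
  by (simp add: qprev_def)

lemma dim_qprev [simp]: "dim_vec (qprev h u B l) = dim_row B"
  by (simp add: qprev_def)

lemma Qm_carrier [simp]: "Qm h u B k \<in> carrier_mat (dim_row B) k"
  by (simp add: Qm_def)

lemma dim_Qm [simp]: "dim_row (Qm h u B k) = dim_row B" "dim_col (Qm h u B k) = k"
  by (simp_all add: Qm_def)

lemma col_Qm: "j < k \<Longrightarrow> col (Qm h u B k) j = qv h u B j"
  by (auto simp: Qm_def vec_eq_iff)

lemma Qm_mult_unit_vec: "j < k \<Longrightarrow> Qm h u B k *\<^sub>v unit_vec k j = qv h u B j"
  by (simp add: mult_mat_unit_vec[OF Qm_carrier] col_Qm)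

lemma Um_carrier [simp]: "Um u n k \<in> carrier_mat n k"
  by (simp add: Um_def)

lemma dim_Um [simp]: "dim_row (Um u n k) = n" "dim_col (Um u n k) = k"
  by (simp_all add: Um_def)

lemma col_Um: "j < k \<Longrightarrow> u (Suc j) \<in> carrier_vec n \<Longrightarrow> col (Um u n k) j = u (Suc j)"
  by (auto simp: Um_def vec_eq_iff)

definition onsager_mat :: "(nat \<Rightarrow> real \<Rightarrow> real vec \<Rightarrow> real) \<Rightarrow> (nat \<Rightarrow> real vec) \<Rightarrow> real mat \<Rightarrow> nat \<Rightarrow> real mat"
  where "onsager_mat dh u B k = mat k k (\<lambda>(l, j). if Suc l = j then dk dh u B j else 0)"

lemma onsager_mat_carrier [simp]: "onsager_mat dh u B k \<in> carrier_mat k k"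
  by (simp add: onsager_mat_def)

lemma dim_onsager_mat [simp]: "dim_row (onsager_mat dh u B k) = k" "dim_col (onsager_mat dh u B k) = k"
  by (simp_all add: onsager_mat_def)

lemma col_Qm_mult_onsager_mat:
  assumes "j < k"
  shows "col (Qm h u B k * onsager_mat dh u B k) j = dk dh u B j \<cdot>\<^sub>v qprev h u B j"
proof -
  have col_prod: "col (Qm h u B k * onsager_mat dh u B k) j = Qm h u B k *\<^sub>v col (onsager_mat dh u B k) j"
    by (rule col_mult2[OF Qm_carrier onsager_mat_carrier assms])
  have col_onsager: "col (onsager_mat dh u B k) j
      = (if j = 0 then 0\<^sub>v k else dk dh u B j \<cdot>\<^sub>v unit_vec k (j - 1))"
    using assms by (auto simp: vec_eq_iff onsager_mat_def)
  show ?thesis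
  proof (cases "j = 0")
    case True
    then show ?thesis
      unfolding col_prod col_onsager
      by (simp add: mult_mat_vec_zero[OF Qm_carrier] dk_def qprev_def vec_eq_iff)
  next
    case False
    then show ?thesis
      unfolding col_prod col_onsager using assms
      by (simp add: mult_mat_vec[OF Qm_carrier unit_vec_carrier] Qm_mult_unit_vec qprev_def)
  qed
qed

lemma amp_mult_Qm:
  fixes A B :: "real mat"
  assumes A: "A \<in> carrier_mat n n" and B: "dim_row B = n"
    and iter: "\<And>k. u (Suc k) = A *\<^sub>v qv h u B k - (\<rho> * dk dh u B k) \<cdot>\<^sub>v qprev h u B k"
  shows "A * Qm h u B k = Um u n k + \<rho> \<cdot>\<^sub>m (Qm h u B k * onsager_mat dh u B k)"
proof (rule mat_col_eqI)
  fix j assume "j < dim_col (Um u n k + \<rho> \<cdot>\<^sub>m (Qm h u B k * onsager_mat dh u B k))"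
  then have j: "j < k" by simp
  have Q: "Qm h u B k \<in> carrier_mat n k" using Qm_carrier[of h u B k] B by simp
  have QS: "Qm h u B k * onsager_mat dh u B k \<in> carrier_mat n k" using Q by simp
  have q: "qv h u B j \<in> carrier_vec n" and qp: "qprev h u B j \<in> carrier_vec n"
    using qv_carrier[of h u B j] qprev_carrier[of h u B j] B by simp_all
  have u: "u (Suc j) \<in> carrier_vec n" unfolding iter[of j] using A q qp by simp
  have "col (A * Qm h u B k) j = A *\<^sub>v qv h u B j"
    using col_mult2[OF A Q j] col_Qm[OF j] by simp
  also have "\<dots> = u (Suc j) + \<rho> \<cdot>\<^sub>v (dk dh u B j \<cdot>\<^sub>v qprev h u B j)"
    unfolding iter[of j] using A B q qp by (intro eq_vecI) auto
  also have "\<dots> = col (Um u n k + \<rho> \<cdot>\<^sub>m (Qm h u B k * onsager_mat dh u B k)) j"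
    using j u QS by (simp add: col_add[of _ n k] col_Um col_Qm_mult_onsager_mat)
  finally show "col (A * Qm h u B k) j = col (Um u n k + \<rho> \<cdot>\<^sub>m (Qm h u B k * onsager_mat dh u B k)) j" .
qed (use A B in auto)

lemma col_vv_mat:
  assumes "l < k"
  shows "col ((Um u (dim_row B) k)\<^sup>T * Qm h u B k - (Qm h u B k)\<^sup>T * (Qm h u B k * onsager_mat dh u B k)) l
    = vv h dh u B k l"
proof -
  let ?U = "Um u (dim_row B) k" and ?Q = "Qm h u B k" and ?S = "onsager_mat dh u B k"
  have "col (?U\<^sup>T * ?Q) l = ?U\<^sup>T *\<^sub>v qv h u B l"
    using col_mult2[of "?U\<^sup>T" k "dim_row B" ?Q k l] assms by (simp add: col_Qm)
  moreover have "col (?Q\<^sup>T * (?Q * ?S)) l = dk dh u B l \<cdot>\<^sub>v (?Q\<^sup>T *\<^sub>v qprev h u B l)"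
    using col_mult2[OF _ mult_carrier_mat[OF Qm_carrier[of h u B k] onsager_mat_carrier[of dh u B k]] assms,
        of "?Q\<^sup>T" k] assms
    by (simp add: col_Qm_mult_onsager_mat mult_mat_vec[of _ k "dim_row B"])
  moreover have "?U\<^sup>T * ?Q \<in> carrier_mat k k" by (rule mult_carrier_mat[of _ k "dim_row B"]) auto
  moreover have "?Q\<^sup>T * (?Q * ?S) \<in> carrier_mat k k"
    by (rule mult_carrier_mat[of _ k "dim_row B"]) (auto intro: mult_carrier_mat[of _ "dim_row B" k])
  ultimately show ?thesis
    using col_minus_mat[of "?U\<^sup>T * ?Q" k k "?Q\<^sup>T * (?Q * ?S)" l] assms by (simp add: vv_def)
qed

lemma alph_carrier: "alph h u B k \<in> carrier_vec k"
proof -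
  have "(Qm h u B k)\<^sup>T * Qm h u B k \<in> carrier_mat k k" by (rule mult_carrier_mat[of _ k "dim_row B"]) auto
  then show ?thesis
    unfolding alph_def Let_def by (intro carrier_vecI) (simp add: carrier_matD(1)[OF pinv_carrier])
qed

lemma sum_alph_u_eq:
  assumes "\<And>j. u (Suc j) \<in> carrier_vec n"
  shows "vec n (\<lambda>i. \<Sum>l=1..k. alph h u B k $ (l - 1) * u l $ i) = Um u n k *\<^sub>v alph h u B k"
  unfolding mult_mat_vec_eq_sum_cols[OF Um_carrier alph_carrier] using assms
  by (auto simp: vec_eq_iff col_Um sum.atLeast1_atMost_eq intro!: sum.cong)

lemma sum_alph_vv_eq:
  fixes h dh :: "nat \<Rightarrow> real \<Rightarrow> real vec \<Rightarrow> real" and u :: "nat \<Rightarrow> real vec" and B :: "real mat"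
    and k :: nat
  defines "V \<equiv> (Um u (dim_row B) k)\<^sup>T * Qm h u B k - (Qm h u B k)\<^sup>T * (Qm h u B k * onsager_mat dh u B k)"
  shows "vec k (\<lambda>j. vv h dh u B k k $ j - (\<Sum>l=1..k. alph h u B k $ (l - 1) * vv h dh u B k (l - 1) $ j))
    = vv h dh u B k k - V *\<^sub>v alph h u B k"
proof -
  have V: "V \<in> carrier_mat k k" unfolding V_def by auto
  show ?thesis
    unfolding mult_mat_vec_eq_sum_cols[OF V alph_carrier] using col_vv_mat[of _ k u B h dh]
    by (auto simp: V_def vv_def vec_eq_iff sum.atLeast1_atMost_eq intro!: sum.cong)
qed

lemma amp_iterate_step:
  fixes A B :: "real mat"
  assumes A: "A \<in> carrier_mat n n" and B: "dim_row B = n"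
    and iter: "\<And>k. u (Suc k) = A *\<^sub>v qv h u B k - (\<rho> * dk dh u B k) \<cdot>\<^sub>v qprev h u B k"
    and k: "1 \<le> k"
  shows "u (Suc k) =
       vec n (\<lambda>i. (\<Sum>l=1..k. alph h u B k $ (l - 1) * u l $ i))
       + \<rho> \<cdot>\<^sub>v ((Qm h u B k * pinv (transpose_mat (Qm h u B k) * Qm h u B k)) *\<^sub>v
            vec k (\<lambda>j. vv h dh u B k k $ j - (\<Sum>l=1..k. alph h u B k $ (l - 1) * vv h dh u B k (l - 1) $ j)))
       + Ik \<rho> h u B A k"
proof -
  define Q where "Q = Qm h u B k"
  define U where "U = Um u n k"
  define S where "S = onsager_mat dh u B k"
  define X where "X = pinv (Q\<^sup>T * Q)"
  define e :: "real vec" where "e = unit_vec k (k - 1)"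
  have Q: "Q \<in> carrier_mat n k" unfolding Q_def using Qm_carrier[of h u B k] B by simp
  have X: "X \<in> carrier_mat k k" unfolding X_def using pinv_carrier[of "Q\<^sup>T * Q" k k] Q by simp
  have q: "qv h u B k \<in> carrier_vec n" using qv_carrier[of h u B k] B by simp
  have u: "u (Suc j) \<in> carrier_vec n" for j
    unfolding iter[of j] using A B qv_carrier[of h u B j] qprev_carrier[of h u B j] by simp
  have Qe: "Q *\<^sub>v e = qprev h u B k"
    unfolding Q_def e_def qprev_def using k by (simp add: Qm_mult_unit_vec)
  have vv: "vv h dh u B k k = U\<^sup>T *\<^sub>v qv h u B k - dk dh u B k \<cdot>\<^sub>v (Q\<^sup>T *\<^sub>v (Q *\<^sub>v e))"
    unfolding Qe unfolding vv_def U_def Q_def B ..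
  have "u (Suc k) = A *\<^sub>v qv h u B k - (\<rho> * dk dh u B k) \<cdot>\<^sub>v (Q *\<^sub>v e)"
    unfolding Qe by (rule iter)
  also have "\<dots> = U *\<^sub>v alph h u B k
      + \<rho> \<cdot>\<^sub>v ((Q * X) *\<^sub>v (vv h dh u B k k - (U\<^sup>T * Q - Q\<^sup>T * (Q * S)) *\<^sub>v alph h u B k))
      + (A - \<rho> \<cdot>\<^sub>m (Q * X * Q\<^sup>T * A\<^sup>T)) *\<^sub>v ((1\<^sub>m n - Q * X * Q\<^sup>T) *\<^sub>v qv h u B k)"
    unfolding vv alph_def Let_def Q_def[symmetric] X_def[symmetric]
    by (rule amp_iterate_decomposition[OF A Q _ _ X _ _ _ _ _])
      (use Q X q mult_pinv_gram_mat[OF Q] gram_mat_mult_pinv[OF Q] amp_mult_Qm[OF A B iter]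
        in \<open>simp_all add: X_def Q_def U_def S_def e_def B\<close>)
  finally show ?thesis
    unfolding sum_alph_u_eq[of u n, OF u] sum_alph_vv_eq Ik_def Pm_def Let_def B
    unfolding Q_def U_def S_def X_def .
qed

lemma Ik_0:
  assumes "A \<in> carrier_mat (dim_row B) (dim_row B)"
  shows "Ik \<rho> h u B A 0 = A *\<^sub>v qv h u B 0"
proof -
  have "Pm h u B 0 = 0\<^sub>m (dim_row B) (dim_row B)"
    unfolding Pm_def Let_def by (intro eq_matI) (auto simp: scalar_prod_def)
  moreover have "A - \<rho> \<cdot>\<^sub>m (0\<^sub>m (dim_row B) (dim_row B) * A\<^sup>T) = A"
    using assms by (intro eq_matI) auto
  moreover have "1\<^sub>m (dim_row B) - 0\<^sub>m (dim_row B) (dim_row B) = (1\<^sub>m (dim_row B) :: real mat)"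
    by (intro eq_matI) auto
  ultimately show ?thesis unfolding Ik_def Let_def by simp
qed

theorem proposition4:
  fixes n p :: nat and \<rho> :: real and A B :: "real mat" and u0 :: "real vec"
    and h dh :: "nat \<Rightarrow> real \<Rightarrow> real vec \<Rightarrow> real"
    and u :: "nat \<Rightarrow> real vec"
  assumes rho: "-1 \<le> \<rho>" "\<rho> \<le> 1"
    and A: "A \<in> carrier_mat n n"
    and B: "B \<in> carrier_mat n p"
    and u0: "u0 \<in> carrier_vec n"
    and init: "u 0 = u0"
    and iter: "\<And>k. u (Suc k) = A *\<^sub>v qv h u B k - (\<rho> * dk dh u B k) \<cdot>\<^sub>v qprev h u B k"
  shows "u 1 = A *\<^sub>v qv h u B 0 \<and> A *\<^sub>v qv h u B 0 = Ik \<rho> h u B A 0 \<and>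
    (\<forall>k\<ge>1. u (Suc k) =
       vec n (\<lambda>i. (\<Sum>l=1..k. alph h u B k $ (l - 1) * u l $ i))
       + \<rho> \<cdot>\<^sub>v ((Qm h u B k * pinv (transpose_mat (Qm h u B k) * Qm h u B k)) *\<^sub>v
            vec k (\<lambda>j. vv h dh u B k k $ j - (\<Sum>l=1..k. alph h u B k $ (l - 1) * vv h dh u B k (l - 1) $ j)))
       + Ik \<rho> h u B A k)"
proof -
  have n: "dim_row B = n" using B by simp
  have "u 1 = A *\<^sub>v qv h u B 0"
    unfolding One_nat_def iter[of 0] using A n by (intro eq_vecI) (auto simp: dk_def qprev_def)
  moreover have "A *\<^sub>v qv h u B 0 = Ik \<rho> h u B A 0"
    using Ik_0[of A B] A n by simp
  ultimately show ?thesis using amp_iterate_step[OF A n iter] by blast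
qed

end
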